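(* Let $X$ be a $k$-regular distance regular graph of diameter $d$, let $Y=\mathrm{LD}(X)$, and let $Y_i$ be the $i$-th distance digraph of $Y$. Let $\lambda$ be an eigenvalue of $A(X)$ with $\lambda\neq\pm k$, let $E_\lambda$ be the orthogonal projection onto the $\lambda$-eigenspace of $A(X)$, and set $S_\lambda := D_t^TE_\lambda D_h - D_h^TE_\lambda D_t$. Then \[S_\lambda\in\mathrm{span}\{S(Y_1),S(Y_2),\dots,S(Y_d)\}.\]
   Context: $X$ is a connected distance regular graph (for vertices $u,v$ at distance $\ell$, the number of vertices at distance $i$ from $u$ and $j$ from $v$ depends only on $i,j,\ell$). Each edge $\{a,b\}$ of $X$ is replaced by arcs $(a,b)$ and $(b,a)$; the line digraph $\mathrm{LD}(X)$ has the arcs as vertices, with an arc from $(a,b)$ to $(c,d)$ iff $b=c$. For a digraph $Y$, its $i$-th distance digraph $Y_i$ has the same vertex set, with $a$ adjacent to $b$ iff the directed distance from $a$ to $b$ in $Y$ is $i$. For a digraph $Z$ with $01$-adjacency matrix $A(Z)$, its skew-adjacency matrix is $S(Z)=A(Z)-A(Z)^T$. $D_t$ and $D_h$ have rows indexed by vertices and columns by arcs: $(D_t)_{u,(a,b)}=1$ iff $u=a$, $(D_h)_{u,(a,b)}=1$ iff $u=b$, and $0$ otherwise. *)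

theory Defs
  imports Complex_Main
begin

definition reach :: "('a \<Rightarrow> 'a \<Rightarrow> bool) \<Rightarrow> 'a \<Rightarrow> 'a \<Rightarrow> bool" where
  "reach R x y \<longleftrightarrow> (\<exists>n. (R ^^ n) x y)"

text \<open>(Directed) distance: least length of a walk; meaningful only if reachable.\<close>
definition ddist :: "('a \<Rightarrow> 'a \<Rightarrow> bool) \<Rightarrow> 'a \<Rightarrow> 'a \<Rightarrow> nat" where
  "ddist R x y = (LEAST n. (R ^^ n) x y)"

definition simple_graph :: "('v \<Rightarrow> 'v \<Rightarrow> bool) \<Rightarrow> bool" where
  "simple_graph E \<longleftrightarrow> (\<forall>u v. E u v \<longleftrightarrow> E v u) \<and> (\<forall>u. \<not> E u u)"

definition connected_graph :: "('v \<Rightarrow> 'v \<Rightarrow> bool) \<Rightarrow> bool" where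
  "connected_graph E \<longleftrightarrow> (\<forall>u v. reach E u v)"

definition regular_graph :: "('v::finite \<Rightarrow> 'v \<Rightarrow> bool) \<Rightarrow> nat \<Rightarrow> bool" where
  "regular_graph E k \<longleftrightarrow> (\<forall>v. card {w. E v w} = k)"

definition distance_regular :: "('v::finite \<Rightarrow> 'v \<Rightarrow> bool) \<Rightarrow> bool" where
  "distance_regular E \<longleftrightarrow> (\<exists>p :: nat \<Rightarrow> nat \<Rightarrow> nat \<Rightarrow> nat.
     \<forall>u v i j. card {w. ddist E u w = i \<and> ddist E v w = j} = p i j (ddist E u v))"

definition diameter :: "('v::finite \<Rightarrow> 'v \<Rightarrow> bool) \<Rightarrow> nat" where
  "diameter E = Max {ddist E u v | u v. True}"

definition adj_mat :: "('v \<Rightarrow> 'v \<Rightarrow> bool) \<Rightarrow> 'v \<Rightarrow> 'v \<Rightarrow> real" where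
  "adj_mat E u w = (if E u w then 1 else 0)"

definition eigenspace :: "('v::finite \<Rightarrow> 'v \<Rightarrow> real) \<Rightarrow> real \<Rightarrow> ('v \<Rightarrow> real) set" where
  "eigenspace A mu = {f. \<forall>u. (\<Sum>w\<in>UNIV. A u w * f w) = mu * f u}"

definition is_eigenvalue :: "('v::finite \<Rightarrow> 'v \<Rightarrow> real) \<Rightarrow> real \<Rightarrow> bool" where
  "is_eigenvalue A mu \<longleftrightarrow> (\<exists>f \<in> eigenspace A mu. f \<noteq> (\<lambda>_. 0))"

definition orth_proj_mat :: "('v::finite \<Rightarrow> 'v \<Rightarrow> real) \<Rightarrow> ('v \<Rightarrow> real) set \<Rightarrow> bool" where
  "orth_proj_mat P W \<longleftrightarrow> (\<forall>f. (\<lambda>u. \<Sum>w\<in>UNIV. P u w * f w) \<in> W \<and>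
      (\<forall>g\<in>W. (\<Sum>u\<in>UNIV. (f u - (\<Sum>w\<in>UNIV. P u w * f w)) * g u) = 0))"

definition arcs :: "('v \<Rightarrow> 'v \<Rightarrow> bool) \<Rightarrow> ('v \<times> 'v) set" where
  "arcs E = {(a,b). E a b}"

definition LD :: "('v \<Rightarrow> 'v \<Rightarrow> bool) \<Rightarrow> 'v \<times> 'v \<Rightarrow> 'v \<times> 'v \<Rightarrow> bool" where
  "LD E x y \<longleftrightarrow> x \<in> arcs E \<and> y \<in> arcs E \<and> snd x = fst y"

definition dist_digraph :: "('a \<Rightarrow> 'a \<Rightarrow> bool) \<Rightarrow> nat \<Rightarrow> 'a \<Rightarrow> 'a \<Rightarrow> bool" where
  "dist_digraph R i x y \<longleftrightarrow> reach R x y \<and> ddist R x y = i"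

definition adj01 :: "('a \<Rightarrow> 'a \<Rightarrow> bool) \<Rightarrow> 'a \<Rightarrow> 'a \<Rightarrow> real" where
  "adj01 R x y = (if R x y then 1 else 0)"

definition mtrans :: "('a \<Rightarrow> 'b \<Rightarrow> real) \<Rightarrow> 'b \<Rightarrow> 'a \<Rightarrow> real" where
  "mtrans M i j = M j i"

definition skew_adj :: "('a \<Rightarrow> 'a \<Rightarrow> bool) \<Rightarrow> 'a \<Rightarrow> 'a \<Rightarrow> real" where
  "skew_adj R x y = adj01 R x y - mtrans (adj01 R) x y"

definition mmult :: "'k set \<Rightarrow> ('a \<Rightarrow> 'k \<Rightarrow> real) \<Rightarrow> ('k \<Rightarrow> 'b \<Rightarrow> real) \<Rightarrow> 'a \<Rightarrow> 'b \<Rightarrow> real" where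
  "mmult K M N i j = (\<Sum>k\<in>K. M i k * N k j)"

definition Dt :: "'v \<Rightarrow> 'v \<times> 'v \<Rightarrow> real" where
  "Dt u x = (if u = fst x then 1 else 0)"

definition Dh :: "'v \<Rightarrow> 'v \<times> 'v \<Rightarrow> real" where
  "Dh u x = (if u = snd x then 1 else 0)"

definition S_lam :: "('v::finite \<Rightarrow> 'v \<Rightarrow> real) \<Rightarrow> 'v \<times> 'v \<Rightarrow> 'v \<times> 'v \<Rightarrow> real" where
  "S_lam P x y = mmult UNIV (mmult UNIV (mtrans Dt) P) Dh x y
               - mmult UNIV (mmult UNIV (mtrans Dh) P) Dt x y"

end

theory Submission
  imports Defs "HOL-Analysis.Finite_Cartesian_Product" "HOL-Analysis.Linear_Algebra"
    "HOL-Computational_Algebra.Polynomial"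
begin

text \<open>The projection \<open>E\<^sub>\<lambda>\<close> onto an eigenspace of a real symmetric matrix \<open>A\<close> is a polynomial
  in \<open>A\<close>: if \<open>m\<close> annihilates \<open>A\<close>, write \<open>m = (x - \<lambda>)\<^sup>r g\<close> with \<open>g(\<lambda>) \<noteq> 0\<close>. By symmetry
  \<open>A - \<lambda>\<close> has no nilpotent part on its generalised eigenspace, so \<open>g(A)/g(\<lambda>)\<close> maps into the
  eigenspace, while \<open>f - g(A)f/g(\<lambda>)\<close> lies in the range of \<open>A - \<lambda>\<close>, which is orthogonal to it.
  In a distance-regular graph every polynomial in \<open>A\<close> has entries depending only on the
  distance, so \<open>E\<^sub>\<lambda>(u,w) = \<psi>(\<partial>(u,w))\<close>. Now \<open>S\<^sub>\<lambda>(x,y) = E\<^sub>\<lambda>(tail x, head y) - E\<^sub>\<lambda>(head x, tail y)\<close>,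
  and for arcs \<open>x \<noteq> y\<close> the distance from \<open>x\<close> to \<open>y\<close> in \<open>LD(X)\<close> is \<open>1 + \<partial>(head x, tail y)\<close>, so
  \<open>c\<^sub>i = \<psi>(d) - \<psi>(i - 1)\<close> works.\<close>

definition matvec :: "('v::finite \<Rightarrow> 'v \<Rightarrow> real) \<Rightarrow> ('v \<Rightarrow> real) \<Rightarrow> 'v \<Rightarrow> real" where
  "matvec A f = (\<lambda>u. \<Sum>w\<in>UNIV. A u w * f w)"

definition poly_act :: "('v::finite \<Rightarrow> 'v \<Rightarrow> real) \<Rightarrow> real poly \<Rightarrow> ('v \<Rightarrow> real) \<Rightarrow> 'v \<Rightarrow> real" where
  "poly_act A p f = (\<lambda>u. \<Sum>i\<le>degree p. coeff p i * (matvec A ^^ i) f u)"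

definition unit_fun :: "'v \<Rightarrow> 'v \<Rightarrow> real" where
  "unit_fun w = (\<lambda>u. if u = w then 1 else 0)"

definition dot :: "('v::finite \<Rightarrow> real) \<Rightarrow> ('v \<Rightarrow> real) \<Rightarrow> real" where
  "dot f g = (\<Sum>u\<in>UNIV. f u * g u)"

definition shift_act :: "('v::finite \<Rightarrow> 'v \<Rightarrow> real) \<Rightarrow> real \<Rightarrow> ('v \<Rightarrow> real) \<Rightarrow> 'v \<Rightarrow> real" where
  "shift_act A mu f = (\<lambda>u. matvec A f u - mu * f u)"

subsection \<open>Polynomials acting on vectors\<close>

lemma matvec_sum: "matvec A (\<lambda>z. \<Sum>i\<in>I. g i z) u = (\<Sum>i\<in>I. matvec A (g i) u)"
  unfolding matvec_def by (simp add: sum_distrib_left sum.swap[of _ I])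

lemma matvec_cmult: "matvec A (\<lambda>z. c * g z) u = c * matvec A g u"
  unfolding matvec_def by (simp add: sum_distrib_left algebra_simps)

lemma poly_act_eq_sum_lessThan:
  assumes "degree p < n"
  shows "poly_act A p f u = (\<Sum>i<n. coeff p i * (matvec A ^^ i) f u)"
proof -
  have "(\<Sum>i<n. coeff p i * (matvec A ^^ i) f u) = (\<Sum>i\<le>degree p. coeff p i * (matvec A ^^ i) f u)"
    by (rule sum.mono_neutral_right) (use assms in \<open>auto simp: coeff_eq_0\<close>)
  then show ?thesis by (simp add: poly_act_def)
qed

lemma poly_act_add: "poly_act A (p + q) f u = poly_act A p f u + poly_act A q f u"
proof -
  define n where "n = Suc (degree p + degree q)"
  have "degree (p + q) < n" using degree_add_le_max[of p q] unfolding n_def by linarith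
  then have "poly_act A (p + q) f u = (\<Sum>i<n. coeff (p + q) i * (matvec A ^^ i) f u)"
    by (rule poly_act_eq_sum_lessThan)
  also have "\<dots> = (\<Sum>i<n. coeff p i * (matvec A ^^ i) f u) + (\<Sum>i<n. coeff q i * (matvec A ^^ i) f u)"
    by (simp add: algebra_simps sum.distrib)
  also have "\<dots> = poly_act A p f u + poly_act A q f u"
    using poly_act_eq_sum_lessThan[of p n A f u] poly_act_eq_sum_lessThan[of q n A f u]
    by (simp add: n_def)
  finally show ?thesis .
qed

lemma poly_act_diff: "poly_act A (p - q) f u = poly_act A p f u - poly_act A q f u"
  using poly_act_add[of A "p - q" q f u] by simp

lemma poly_act_sum: "finite I \<Longrightarrow> poly_act A (\<Sum>i\<in>I. p i) f u = (\<Sum>i\<in>I. poly_act A (p i) f u)"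
  by (induction I rule: finite_induct) (simp add: poly_act_def, simp add: poly_act_add)

lemma poly_act_smult: "poly_act A (smult a p) f u = a * poly_act A p f u"
proof -
  have "poly_act A (smult a p) f u = (\<Sum>i<Suc (degree p). coeff (smult a p) i * (matvec A ^^ i) f u)"
    by (rule poly_act_eq_sum_lessThan) (use degree_smult_le[of a p] in linarith)
  also have "\<dots> = a * (\<Sum>i<Suc (degree p). coeff p i * (matvec A ^^ i) f u)"
    by (simp only: coeff_smult sum_distrib_left mult.assoc)
  finally show ?thesis by (simp only: poly_act_eq_sum_lessThan[of p "Suc (degree p)", symmetric] lessI)
qed

lemma poly_act_monom: "poly_act A (monom c i) f u = c * (matvec A ^^ i) f u"
proof -
  have "poly_act A (monom c i) f u = (\<Sum>j<Suc i. coeff (monom c i) j * (matvec A ^^ j) f u)"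
    by (rule poly_act_eq_sum_lessThan) (simp add: degree_monom_le le_imp_less_Suc)
  also have "\<dots> = (\<Sum>j<Suc i. if j = i then c * (matvec A ^^ i) f u else 0)"
    by (rule sum.cong) (auto simp: coeff_monom)
  finally show ?thesis by simp
qed

lemma poly_act_const: "poly_act A [:c:] f = (\<lambda>u. c * f u)"
  by (simp add: poly_act_def)

lemma poly_act_pCons: "poly_act A (pCons a p) f u = a * f u + matvec A (poly_act A p f) u"
proof -
  define n where "n = Suc (degree p)"
  have "poly_act A (pCons a p) f u = (\<Sum>i<Suc n. coeff (pCons a p) i * (matvec A ^^ i) f u)"
    by (rule poly_act_eq_sum_lessThan) (simp add: n_def degree_pCons_le le_imp_less_Suc)
  also have "\<dots> = a * f u + (\<Sum>i<n. coeff p i * matvec A ((matvec A ^^ i) f) u)"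
    by (simp only: sum.lessThan_Suc_shift) simp
  also have "\<dots> = a * f u + matvec A (\<lambda>z. \<Sum>i<n. coeff p i * (matvec A ^^ i) f z) u"
    by (simp add: matvec_sum matvec_cmult)
  also have "(\<lambda>z. \<Sum>i<n. coeff p i * (matvec A ^^ i) f z) = poly_act A p f"
    by (rule ext, rule poly_act_eq_sum_lessThan[symmetric]) (simp add: n_def)
  finally show ?thesis .
qed

lemma poly_act_mult: "poly_act A (p * q) f = poly_act A p (poly_act A q f)"
proof (induction p rule: pCons_induct)
  case 0
  then show ?case by (simp add: poly_act_def fun_eq_iff)
next
  case (pCons a p)
  have "poly_act A (pCons a p * q) f u = poly_act A (pCons a p) (poly_act A q f) u" for u
  proof -
    have "poly_act A (pCons a p * q) f u = poly_act A (smult a q + pCons 0 (p * q)) f u" by simp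
    also have "\<dots> = a * poly_act A q f u + matvec A (poly_act A (p * q) f) u"
      by (simp add: poly_act_add poly_act_smult poly_act_pCons)
    finally show ?thesis by (simp add: poly_act_pCons pCons.IH)
  qed
  then show ?case by blast
qed

lemma funpow_matvec_unit_fun_expand:
  "(matvec A ^^ i) f u = (\<Sum>w\<in>UNIV. (matvec A ^^ i) (unit_fun w) u * f w)"
proof (induction i arbitrary: u)
  case 0
  have "(\<Sum>w\<in>UNIV. unit_fun w u * f w) = (\<Sum>w\<in>UNIV. if u = w then f w else 0)"
    by (rule sum.cong) (auto simp: unit_fun_def)
  then show ?case by simp
next
  case (Suc i)
  have "(matvec A ^^ Suc i) f u = matvec A (\<lambda>z. \<Sum>w\<in>UNIV. (matvec A ^^ i) (unit_fun w) z * f w) u"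
    by (simp add: Suc.IH[symmetric])
  also have "\<dots> = (\<Sum>w\<in>UNIV. matvec A ((matvec A ^^ i) (unit_fun w)) u * f w)"
    by (simp add: matvec_sum matvec_cmult mult.commute)
  finally show ?case by simp
qed

lemma poly_act_unit_fun_expand: "poly_act A p f u = (\<Sum>w\<in>UNIV. poly_act A p (unit_fun w) u * f w)"
  unfolding poly_act_def
  by (subst funpow_matvec_unit_fun_expand)
    (simp add: sum_distrib_left sum_distrib_right sum.swap[of _ UNIV] mult.assoc)

lemma poly_act_eq_0_if_unit_fun:
  assumes "\<And>w u. poly_act A p (unit_fun w) u = 0"
  shows "poly_act A p f = (\<lambda>_. 0)"
  unfolding fun_eq_iff by (subst poly_act_unit_fun_expand) (simp add: assms)

text \<open>The powers of \<open>A\<close>, viewed as vectors of length \<open>|V|\<^sup>2\<close>, are linearly dependent.\<close>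

lemma exists_annihilating_poly:
  fixes A :: "'v::finite \<Rightarrow> 'v \<Rightarrow> real"
  shows "\<exists>m. m \<noteq> 0 \<and> (\<forall>f. poly_act A m f = (\<lambda>_. 0))"
proof -
  define N where "N = CARD('v \<times> 'v)"
  define vecs :: "nat \<Rightarrow> real^('v \<times> 'v)" where
    "vecs i = (\<chi> x. (matvec A ^^ i) (unit_fun (snd x)) (fst x))" for i
  show ?thesis
  proof (cases "inj_on vecs {..N}")
    case False
    then obtain i j where ij: "i \<noteq> j" "vecs i = vecs j"
      unfolding inj_on_def by blast
    define m where "m = monom (1::real) i - monom 1 j"
    have "coeff m i \<noteq> 0" using ij(1) by (simp add: m_def coeff_monom)
    then have "m \<noteq> 0" by auto
    moreover have "poly_act A m (unit_fun w) u = 0" for w u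
      using arg_cong[OF ij(2), of "\<lambda>v. v $ (u, w)"] by (simp add: m_def poly_act_diff poly_act_monom vecs_def)
    ultimately show ?thesis using poly_act_eq_0_if_unit_fun by blast
  next
    case True
    define S where "S = vecs ` {..N}"
    have "card S = Suc N" using True by (simp add: S_def card_image)
    then have "dependent S"
      by (intro dependent_biggerset) (simp add: N_def)
    then obtain c where c: "\<exists>v\<in>S. c v \<noteq> 0" "(\<Sum>v\<in>S. c v *\<^sub>R v) = 0"
      using dependent_finite[of S] by (auto simp: S_def)
    define m where "m = (\<Sum>i\<le>N. monom (c (vecs i)) i)"
    have coeff_m: "coeff m i = c (vecs i)" if "i \<le> N" for i
      using that by (simp add: m_def coeff_sum coeff_monom)
    have "m \<noteq> 0"
      using c(1) coeff_m by (auto simp: S_def)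
    moreover have "poly_act A m (unit_fun w) u = 0" for w u
    proof -
      have "(\<Sum>i\<le>N. c (vecs i) *\<^sub>R vecs i) $ (u, w) = 0"
        using c(2) True by (simp add: S_def sum.reindex)
      then show ?thesis by (simp add: m_def poly_act_sum poly_act_monom vecs_def)
    qed
    ultimately show ?thesis using poly_act_eq_0_if_unit_fun by blast
  qed
qed

subsection \<open>Eigenspace projections of symmetric matrices\<close>

lemma poly_act_linear_factor: "poly_act A [:-mu, 1:] f = shift_act A mu f"
  by (rule ext) (simp add: poly_act_pCons poly_act_const shift_act_def)

lemma poly_act_linear_factor_power: "poly_act A ([:-mu, 1:] ^ r) f = (shift_act A mu ^^ r) f"
proof (induction r arbitrary: f)
  case 0
  then show ?case by (simp add: poly_act_def)
next
  case (Suc r)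
  have "poly_act A ([:-mu, 1:] ^ r * [:-mu, 1:]) f = (shift_act A mu ^^ r) (shift_act A mu f)"
    by (simp only: poly_act_mult poly_act_linear_factor Suc.IH)
  then show ?case by (simp only: power_Suc2 funpow_Suc_right o_apply)
qed

lemma shift_act_cmult: "shift_act A mu (\<lambda>u. a * f u) u = a * shift_act A mu f u"
  by (simp add: shift_act_def matvec_cmult algebra_simps)

lemma shift_act_diff: "shift_act A mu (\<lambda>u. f u - g u) u = shift_act A mu f u - shift_act A mu g u"
  by (simp add: shift_act_def matvec_def algebra_simps sum_subtractf)

lemma eigenspace_iff_shift_act: "f \<in> eigenspace A mu \<longleftrightarrow> shift_act A mu f = (\<lambda>_. 0)"
  by (auto simp: eigenspace_def shift_act_def fun_eq_iff matvec_def)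

lemma dot_self_eq_0: "dot f f = 0 \<Longrightarrow> f = (\<lambda>_. 0)"
  unfolding dot_def by (subst (asm) sum_nonneg_eq_0_iff) auto

lemma dot_shift_act_symmetric:
  assumes "mtrans A = A"
  shows "dot (shift_act A mu f) g = dot f (shift_act A mu g)"
proof -
  have A_sym: "A u w = A w u" for u w
    using fun_cong[OF fun_cong[OF assms, of u], of w] by (simp add: mtrans_def)
  have "dot (matvec A f) g = (\<Sum>u\<in>UNIV. \<Sum>w\<in>UNIV. A u w * f w * g u)"
    by (simp add: dot_def matvec_def sum_distrib_right)
  also have "\<dots> = (\<Sum>w\<in>UNIV. \<Sum>u\<in>UNIV. f w * (A w u * g u))"
    by (subst sum.swap) (simp add: A_sym[of _ w for w] mult_ac)
  also have "\<dots> = dot f (matvec A g)"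
    by (simp add: dot_def matvec_def sum_distrib_left)
  finally have "dot (matvec A f) g = dot f (matvec A g)" .
  moreover have "dot (shift_act A mu f) g = dot (matvec A f) g - mu * dot f g"
    by (simp add: dot_def shift_act_def left_diff_distrib sum_subtractf sum_distrib_left mult.assoc)
  moreover have "dot f (shift_act A mu g) = dot f (matvec A g) - mu * dot f g"
    by (simp add: dot_def shift_act_def right_diff_distrib sum_subtractf sum_distrib_left mult_ac)
  ultimately show ?thesis by simp
qed

text \<open>For symmetric \<open>A\<close> the generalised \<open>\<mu>\<close>-eigenvectors are eigenvectors: if \<open>(A - \<mu>)\<^sup>2 h = 0\<close>
  then \<open>\<parallel>(A - \<mu>) h\<parallel>\<^sup>2 = \<langle>h, (A - \<mu>)\<^sup>2 h\<rangle> = 0\<close>.\<close>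

lemma shift_act_funpow_eq_0:
  assumes "mtrans A = A" and "r \<ge> 1" and "(shift_act A mu ^^ r) h = (\<lambda>_. 0)"
  shows "shift_act A mu h = (\<lambda>_. 0)"
  using assms(2,3)
proof (induction r arbitrary: h rule: nat_induct_at_least)
  case base
  then show ?case by simp
next
  case (Suc r)
  have "(shift_act A mu ^^ r) (shift_act A mu h) = (\<lambda>_. 0)"
    using Suc.prems by (simp only: funpow_Suc_right o_apply)
  then have shift2: "shift_act A mu (shift_act A mu h) = (\<lambda>_. 0)"
    by (rule Suc.IH)
  have "dot (shift_act A mu h) (shift_act A mu h) = dot h (shift_act A mu (shift_act A mu h))"
    by (rule dot_shift_act_symmetric[OF assms(1)])
  also have "\<dots> = 0"
    unfolding shift2 dot_def by simp
  finally show ?case by (rule dot_self_eq_0)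
qed

lemma poly_act_cofactor_in_eigenspace:
  assumes sym: "mtrans A = A" and annihilates: "\<forall>f. poly_act A ([:-mu, 1:] ^ r * g) f = (\<lambda>_. 0)"
  shows "poly_act A g f \<in> eigenspace A mu"
proof (cases "r = 0")
  case True
  then have "poly_act A g f = (\<lambda>_. 0)" using annihilates by simp
  then show ?thesis by (simp add: eigenspace_def)
next
  case False
  have "(shift_act A mu ^^ r) (poly_act A g f) = (\<lambda>_. 0)"
    using annihilates by (simp add: poly_act_linear_factor_power[symmetric] poly_act_mult[symmetric])
  then have "shift_act A mu (poly_act A g f) = (\<lambda>_. 0)"
    using False by (intro shift_act_funpow_eq_0[OF sym, of r]) auto
  then show ?thesis by (simp add: eigenspace_iff_shift_act)
qed

lemma exists_eigenspace_projector_poly: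
  fixes A :: "'v::finite \<Rightarrow> 'v \<Rightarrow> real"
  assumes sym: "mtrans A = A"
  shows "\<exists>q. \<forall>f. poly_act A q f \<in> eigenspace A mu \<and>
                  (\<exists>h. (\<lambda>u. f u - poly_act A q f u) = shift_act A mu h)"
proof -
  obtain m where m: "m \<noteq> 0" "\<forall>f. poly_act A m f = (\<lambda>_. 0)"
    using exists_annihilating_poly[of A] by blast
  obtain g where g: "m = [:-mu, 1:] ^ order mu m * g" "\<not> [:-mu, 1:] dvd g"
    using order_decomp[OF m(1), of mu] by blast
  define c where "c = poly g mu"
  have "c \<noteq> 0" using g(2) by (simp add: c_def poly_eq_0_iff_dvd)
  define q where "q = smult (1 / c) g"
  have g_eigen: "shift_act A mu (poly_act A g f) = (\<lambda>_. 0)" for f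
  proof -
    have "\<forall>f. poly_act A ([:-mu, 1:] ^ order mu m * g) f = (\<lambda>_. 0)"
      using m(2) by (simp flip: g(1))
    then show ?thesis using poly_act_cofactor_in_eigenspace[OF sym] by (simp add: eigenspace_iff_shift_act)
  qed
  have q_eq: "poly_act A q f = (\<lambda>u. (1 / c) * poly_act A g f u)" for f
    by (simp add: q_def poly_act_smult fun_eq_iff)
  have q_eigen: "poly_act A q f \<in> eigenspace A mu" for f
    unfolding q_eq eigenspace_iff_shift_act fun_eq_iff shift_act_cmult using g_eigen by simp
  have q_shift: "(\<lambda>u. f u - poly_act A q f u)
      = shift_act A mu (\<lambda>u. (- 1 / c) * poly_act A (synthetic_div g mu) f u)" for f
  proof -
    have "[:-mu, 1:] * synthetic_div g mu + [:c:] = g"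
      unfolding c_def by (rule synthetic_div_correct')
    from arg_cong[OF this, of "\<lambda>p. poly_act A p f u" for u]
    have g_split: "shift_act A mu (poly_act A (synthetic_div g mu) f) u + c * f u = poly_act A g f u" for u
      by (simp only: poly_act_add poly_act_mult poly_act_linear_factor poly_act_const)
    show ?thesis
      unfolding fun_eq_iff shift_act_cmult q_eq using \<open>c \<noteq> 0\<close> by (simp add: field_simps flip: g_split)
  qed
  show ?thesis
    by (intro exI[of _ q] allI conjI q_eigen) (rule exI, rule q_shift)
qed

lemma orth_proj_mat_unique:
  assumes P: "orth_proj_mat P W"
    and W_diff: "\<And>f g. f \<in> W \<Longrightarrow> g \<in> W \<Longrightarrow> (\<lambda>u. f u - g u) \<in> W"
    and Q: "Q \<in> W" "\<And>g. g \<in> W \<Longrightarrow> dot (\<lambda>u. f u - Q u) g = 0"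
  shows "matvec P f = Q"
proof -
  have PW: "matvec P f \<in> W" and P_perp: "\<forall>g\<in>W. dot (\<lambda>u. f u - matvec P f u) g = 0"
    using P unfolding orth_proj_mat_def matvec_def dot_def by auto
  define e where "e = (\<lambda>u. Q u - matvec P f u)"
  have "e \<in> W" unfolding e_def using Q(1) PW by (rule W_diff)
  have "dot e e = dot (\<lambda>u. f u - matvec P f u) e - dot (\<lambda>u. f u - Q u) e"
    unfolding dot_def e_def by (simp add: sum_subtractf[symmetric] algebra_simps)
  also have "\<dots> = 0" using P_perp Q(2) \<open>e \<in> W\<close> by simp
  finally show ?thesis using dot_self_eq_0[of e] by (simp add: e_def fun_eq_iff)
qed

lemma orth_proj_mat_eigenspace_poly:
  fixes A :: "'v::finite \<Rightarrow> 'v \<Rightarrow> real"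
  assumes sym: "mtrans A = A" and P: "orth_proj_mat P (eigenspace A mu)"
  shows "\<exists>q. \<forall>u w. P u w = poly_act A q (unit_fun w) u"
proof -
  obtain q where q: "\<And>f. poly_act A q f \<in> eigenspace A mu"
    "\<And>f. \<exists>h. (\<lambda>u. f u - poly_act A q f u) = shift_act A mu h"
    using exists_eigenspace_projector_poly[OF sym] by blast
  have W_diff: "(\<lambda>u. f u - g u) \<in> eigenspace A mu"
    if "f \<in> eigenspace A mu" "g \<in> eigenspace A mu" for f g
    using that by (simp add: eigenspace_iff_shift_act shift_act_diff fun_eq_iff)
  have perp: "dot (\<lambda>u. f u - poly_act A q f u) g = 0" if "g \<in> eigenspace A mu" for f g
  proof -
    obtain h where "(\<lambda>u. f u - poly_act A q f u) = shift_act A mu h" using q(2) by blast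
    then show ?thesis
      using that by (simp add: dot_shift_act_symmetric[OF sym] eigenspace_iff_shift_act) (simp add: dot_def)
  qed
  have "P u w = poly_act A q (unit_fun w) u" for u w
  proof -
    have "matvec P (unit_fun w) u = (\<Sum>w'\<in>UNIV. if w' = w then P u w' else 0)"
      unfolding matvec_def unit_fun_def by (intro sum.cong) auto
    then have "P u w = matvec P (unit_fun w) u" by simp
    also have "\<dots> = poly_act A q (unit_fun w) u"
      by (rule fun_cong[OF orth_proj_mat_unique[OF P W_diff q(1) perp]])
    finally show ?thesis .
  qed
  then show ?thesis by blast
qed

subsection \<open>Distances in a graph and in its line digraph\<close>

lemma relpowp_commute: "symp E \<Longrightarrow> (E ^^ n) x y \<longleftrightarrow> (E ^^ n) y x"
proof (induction n arbitrary: x y)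
  case 0
  then show ?case by auto
next
  case (Suc n)
  have "(E ^^ Suc n) x y \<longleftrightarrow> (\<exists>z. (E ^^ n) x z \<and> E z y)" by auto
  also have "\<dots> \<longleftrightarrow> (\<exists>z. E y z \<and> (E ^^ n) z x)" using Suc by (blast dest: sympD)
  also have "\<dots> \<longleftrightarrow> (E ^^ Suc n) y x" by (simp only: relpowp_Suc_left) auto
  finally show ?case .
qed

lemma symp_simple_graph: "simple_graph E \<Longrightarrow> symp E"
  by (simp add: simple_graph_def symp_def)

lemma relpowp_ddist: "reach R x y \<Longrightarrow> (R ^^ ddist R x y) x y"
  unfolding reach_def ddist_def by (auto intro: LeastI)

lemma ddist_le: "(R ^^ n) x y \<Longrightarrow> ddist R x y \<le> n"
  unfolding ddist_def by (rule Least_le)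

lemma ddist_self [simp]: "ddist R x x = 0"
  using ddist_le[where R=R and n=0] by simp

lemma ddist_commute: "symp E \<Longrightarrow> ddist E u w = ddist E w u"
  unfolding ddist_def using relpowp_commute[of E] by presburger

lemma ddist_eq_0_iff: "connected_graph E \<Longrightarrow> ddist E u w = 0 \<longleftrightarrow> u = w"
  using relpowp_ddist[of E u w] ddist_le[where R=E and n=0] by (auto simp: connected_graph_def)

lemma ddist_eq_1_iff:
  assumes "simple_graph E" and "connected_graph E"
  shows "ddist E u w = 1 \<longleftrightarrow> E u w"
proof
  assume "ddist E u w = 1"
  then show "E u w" using relpowp_ddist[of E u w] assms(2) by (auto simp: connected_graph_def)
next
  assume "E u w"
  then have "u \<noteq> w" using assms(1) by (auto simp: simple_graph_def)
  moreover have "ddist E u w \<le> 1" using \<open>E u w\<close> by (intro ddist_le[where n=1]) auto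
  ultimately show "ddist E u w = 1" using ddist_eq_0_iff[OF assms(2)] by fastforce
qed

lemma ddist_le_diameter: "ddist E u w \<le> diameter E"
proof -
  have "{ddist E u v |u v. True} = range (\<lambda>(u, v). ddist E u v)" by auto
  then have "finite {ddist E u v |u v. True}" by simp
  then show ?thesis unfolding diameter_def by (rule Max_ge) blast
qed

lemma relpowp_LD_Suc:
  "(LD E ^^ Suc n) x y \<longleftrightarrow> x \<in> arcs E \<and> y \<in> arcs E \<and> (E ^^ n) (snd x) (fst y)"
proof (induction n arbitrary: y)
  case 0
  then show ?case by (auto simp: LD_def)
next
  case (Suc n)
  have "(LD E ^^ Suc (Suc n)) x y \<longleftrightarrow> (\<exists>z. (LD E ^^ Suc n) x z \<and> LD E z y)" by auto
  also have "\<dots> \<longleftrightarrow>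
      (\<exists>z \<in> arcs E. x \<in> arcs E \<and> y \<in> arcs E \<and> (E ^^ n) (snd x) (fst z) \<and> snd z = fst y)"
    unfolding Suc.IH LD_def by blast
  also have "\<dots> \<longleftrightarrow> x \<in> arcs E \<and> y \<in> arcs E \<and> (\<exists>v. (E ^^ n) (snd x) v \<and> E v (fst y))"
    by (auto simp: arcs_def intro!: bexI[of _ "(v, fst y)" for v])
  also have "\<dots> \<longleftrightarrow> x \<in> arcs E \<and> y \<in> arcs E \<and> (E ^^ Suc n) (snd x) (fst y)" by auto
  finally show ?case .
qed

lemma dist_digraph_LD_iff:
  assumes "connected_graph E" and "x \<in> arcs E" and "y \<in> arcs E" and "i \<ge> 1"
  shows "dist_digraph (LD E) i x y \<longleftrightarrow> x \<noteq> y \<and> Suc (ddist E (snd x) (fst y)) = i"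
proof -
  obtain n where "(E ^^ n) (snd x) (fst y)"
    using assms(1) by (auto simp: connected_graph_def reach_def)
  then have walk: "(LD E ^^ Suc n) x y" using assms(2,3) relpowp_LD_Suc by blast
  then have "reach (LD E) x y" unfolding reach_def by blast
  show ?thesis
  proof (cases "x = y")
    case True
    then show ?thesis using assms(4) by (simp add: dist_digraph_def)
  next
    case False
    have "ddist (LD E) x y = Suc (LEAST m. (LD E ^^ Suc m) x y)"
      unfolding ddist_def by (rule Least_Suc[where P="\<lambda>m. (LD E ^^ m) x y", OF walk]) (use False in simp)
    also have "(LEAST m. (LD E ^^ Suc m) x y) = ddist E (snd x) (fst y)"
      unfolding ddist_def using assms(2,3) by (simp only: relpowp_LD_Suc simp_thms)
    finally show ?thesis using False \<open>reach (LD E) x y\<close> by (auto simp: dist_digraph_def)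
  qed
qed

lemma skew_adj_dist_digraph_LD:
  assumes "connected_graph E" and "x \<in> arcs E" and "y \<in> arcs E" and "i \<ge> 1"
  shows "skew_adj (dist_digraph (LD E) i) x y
           = of_bool (Suc (ddist E (snd x) (fst y)) = i) - of_bool (Suc (ddist E (snd y) (fst x)) = i)"
  using dist_digraph_LD_iff[OF assms] dist_digraph_LD_iff[OF assms(1,3,2,4)]
  by (cases "x = y") (auto simp: skew_adj_def adj01_def mtrans_def)

lemma S_lam_eq: "S_lam P x y = P (fst x) (snd y) - P (snd x) (fst y)"
  by (simp add: S_lam_def mmult_def mtrans_def Dt_def Dh_def if_distrib if_distribR cong: if_cong)

subsection \<open>The Bose--Mesner algebra of a distance-regular graph\<close>

lemma matvec_adj_distance_function:
  fixes E :: "'v::finite \<Rightarrow> 'v \<Rightarrow> bool"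
  assumes s: "simple_graph E" and c: "connected_graph E" and dr: "distance_regular E"
  shows "\<exists>\<psi>. \<forall>u w. matvec (adj_mat E) (\<lambda>z. \<phi> (ddist E z w)) u = \<psi> (ddist E u w)"
proof -
  obtain p where p: "\<And>u v i j. card {w. ddist E u w = i \<and> ddist E v w = j} = p i j (ddist E u v)"
    using dr unfolding distance_regular_def by blast
  define N where "N = diameter E"
  have "matvec (adj_mat E) (\<lambda>z. \<phi> (ddist E z w)) u = (\<Sum>j\<le>N. \<phi> j * real (p 1 j (ddist E u w)))"
    for u w
  proof -
    have "matvec (adj_mat E) (\<lambda>z. \<phi> (ddist E z w)) u
        = (\<Sum>z\<in>UNIV. if ddist E u z = 1 then \<phi> (ddist E w z) else 0)"
      unfolding matvec_def adj_mat_def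
      by (rule sum.cong)
        (simp_all add: ddist_eq_1_iff[OF s c, symmetric] ddist_commute[OF symp_simple_graph[OF s], of _ w])
    also have "\<dots> = (\<Sum>j\<le>N. \<Sum>z\<in>{z \<in> UNIV. ddist E w z = j}.
                          if ddist E u z = 1 then \<phi> (ddist E w z) else 0)"
      by (rule sum.group[symmetric]) (auto simp: N_def ddist_le_diameter)
    also have "\<dots> = (\<Sum>j\<le>N. \<Sum>z\<in>{z. ddist E u z = 1 \<and> ddist E w z = j}. \<phi> j)"
      by (intro sum.cong refl sum.mono_neutral_cong_right) auto
    finally show ?thesis by (simp add: p mult.commute)
  qed
  then show ?thesis by (intro exI[of _ "\<lambda>d. \<Sum>j\<le>N. \<phi> j * real (p 1 j d)"]) simp
qed

lemma poly_act_adj_distance_function: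
  fixes E :: "'v::finite \<Rightarrow> 'v \<Rightarrow> bool"
  assumes s: "simple_graph E" and c: "connected_graph E" and dr: "distance_regular E"
  shows "\<exists>\<phi>. \<forall>u w. poly_act (adj_mat E) g (unit_fun w) u = \<phi> (ddist E u w)"
proof (induction g rule: pCons_induct)
  case 0
  show ?case by (intro exI[of _ "\<lambda>_. 0"]) (simp add: poly_act_def)
next
  case (pCons a q)
  then obtain \<phi> where "\<And>u w. poly_act (adj_mat E) q (unit_fun w) u = \<phi> (ddist E u w)" by blast
  then have q_eq: "poly_act (adj_mat E) q (unit_fun w) = (\<lambda>z. \<phi> (ddist E z w))" for w
    by auto
  obtain \<psi> where \<psi>: "\<And>u w. matvec (adj_mat E) (\<lambda>z. \<phi> (ddist E z w)) u = \<psi> (ddist E u w)"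
    using matvec_adj_distance_function[OF s c dr] by blast
  have "poly_act (adj_mat E) (pCons a q) (unit_fun w) u = a * of_bool (ddist E u w = 0) + \<psi> (ddist E u w)"
    for u w
    by (simp add: poly_act_pCons q_eq \<psi>) (simp add: unit_fun_def ddist_eq_0_iff[OF c])
  then show ?case by (intro exI[of _ "\<lambda>d. a * of_bool (d = 0) + \<psi> d"]) simp
qed

lemma orth_proj_mat_adj_distance_function:
  fixes E :: "'v::finite \<Rightarrow> 'v \<Rightarrow> bool"
  assumes "simple_graph E" and "connected_graph E" and "distance_regular E"
    and "orth_proj_mat P (eigenspace (adj_mat E) mu)"
  shows "\<exists>\<psi>. \<forall>u w. P u w = \<psi> (ddist E u w)"
proof -
  have "mtrans (adj_mat E) = adj_mat E"
    using assms(1) by (auto simp: mtrans_def adj_mat_def simple_graph_def fun_eq_iff)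
  then obtain q where "\<And>u w. P u w = poly_act (adj_mat E) q (unit_fun w) u"
    using orth_proj_mat_eigenspace_poly assms(4) by blast
  moreover obtain \<phi> where "\<And>u w. poly_act (adj_mat E) q (unit_fun w) u = \<phi> (ddist E u w)"
    using poly_act_adj_distance_function[OF assms(1-3)] by blast
  ultimately show ?thesis by auto
qed

lemma sum_shifted_indicator:
  fixes \<psi> :: "nat \<Rightarrow> real"
  assumes "j \<le> d"
  shows "(\<Sum>i=1..d. (\<psi> d - \<psi> (i - 1)) * of_bool (Suc j = i)) = \<psi> d - \<psi> j"
proof -
  have "(\<Sum>i=1..d. (\<psi> d - \<psi> (i - 1)) * of_bool (Suc j = i))
      = (\<Sum>i\<in>{1..d}. if i = Suc j then \<psi> d - \<psi> (i - 1) else 0)"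
    by (intro sum.cong) auto
  also have "\<dots> = \<psi> d - \<psi> j"
    using assms by (cases "j = d") auto
  finally show ?thesis .
qed

lemma S_lam_distance_function_expansion:
  fixes E :: "'v::finite \<Rightarrow> 'v \<Rightarrow> bool"
  assumes "simple_graph E" and "connected_graph E" and P: "\<And>u w. P u w = \<psi> (ddist E u w)"
    and arcs: "x \<in> arcs E" "y \<in> arcs E"
  shows "S_lam P x y = (\<Sum>i=1..diameter E.
           (\<psi> (diameter E) - \<psi> (i - 1)) * skew_adj (dist_digraph (LD E) i) x y)"
proof -
  define d where "d = diameter E"
  let ?dxy = "ddist E (snd x) (fst y)" and ?dyx = "ddist E (snd y) (fst x)"
  have "(\<Sum>i=1..d. (\<psi> d - \<psi> (i - 1)) * skew_adj (dist_digraph (LD E) i) x y)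
      = (\<Sum>i=1..d. (\<psi> d - \<psi> (i - 1)) * of_bool (Suc ?dxy = i))
        - (\<Sum>i=1..d. (\<psi> d - \<psi> (i - 1)) * of_bool (Suc ?dyx = i))"
    by (simp add: skew_adj_dist_digraph_LD[OF assms(2) arcs] right_diff_distrib sum_subtractf)
  also have "\<dots> = (\<psi> d - \<psi> ?dxy) - (\<psi> d - \<psi> ?dyx)"
    using ddist_le_diameter[of E, folded d_def] by (simp only: sum_shifted_indicator)
  also have "\<dots> = S_lam P x y"
    by (simp add: S_lam_eq P ddist_commute[OF symp_simple_graph[OF assms(1)], of "fst x"])
  finally show ?thesis by (simp add: d_def)
qed

theorem lemma5p3:
  fixes E :: "'v::finite \<Rightarrow> 'v \<Rightarrow> bool" and k d :: nat and mu :: real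
    and P :: "'v \<Rightarrow> 'v \<Rightarrow> real"
  assumes "simple_graph E" and "connected_graph E" and "distance_regular E"
    and "regular_graph E k" and "diameter E = d"
    and "is_eigenvalue (adj_mat E) mu" and "mu \<noteq> real k" and "mu \<noteq> - real k"
    and "orth_proj_mat P (eigenspace (adj_mat E) mu)"
  shows "\<exists>c :: nat \<Rightarrow> real. \<forall>x\<in>arcs E. \<forall>y\<in>arcs E.
           S_lam P x y = (\<Sum>i=1..d. c i * skew_adj (dist_digraph (LD E) i) x y)"
proof -
  obtain \<psi> where \<psi>: "\<And>u w. P u w = \<psi> (ddist E u w)"
    using orth_proj_mat_adj_distance_function[OF assms(1-3,9)] by blast
  show ?thesis
    using S_lam_distance_function_expansion[where \<psi>=\<psi>, OF assms(1,2) \<psi>] unfolding assms(5)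
    by (intro exI[of _ "\<lambda>i. \<psi> d - \<psi> (i - 1)"] ballI)
qed

end
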